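(* Let $K$ be a field, $A=\{\alpha_1,\dots,\alpha_m\}\subset K$, $B=\{\beta_1,\dots,\beta_n\}\subset K$ finite sets with $|A|=m$, $|B|=n$, $f=\prod_{i}(x-\alpha_i)$, $g=\prod_j(x-\beta_j)$. Let $\max\{m,n\}\le d\le m+n-1$ and set $k:=m+n-d-1$. Then $$\operatorname{Syl}_{m,d-m}(A,B)=(-1)^{(d-m)n+m+n-1}F_k(f,g)\,f.$$
   Context: For finite sets $Y,Z$, $\mathcal{R}(Y,Z):=\prod_{y\in Y,z\in Z}(y-z)$ (equal to $1$ if $Y$ or $Z$ is empty), and $\mathcal{R}(x,Z):=\mathcal{R}(\{x\},Z)$. For $0\le p\le m$, $0\le q\le n$, $$\operatorname{Syl}_{p,q}(A,B)(x):=\sum_{\substack{A'\subset A,\ B'\subset B\\ |A'|=p,\ |B'|=q}}\mathcal{R}(A',B')\,\mathcal{R}(A\setminus A',B\setminus B')\,\frac{\mathcal{R}(x,A')\,\mathcal{R}(x,B')}{\mathcal{R}(A',A\setminus A')\,\mathcal{R}(B',B\setminus B')}.$$ Write $f=\sum_{i=0}^m f_ix^i$, $g=\sum_{i=0}^ng_ix^i$ with $f_i=g_i=0$ outside the natural ranges. For $0\le k\le\min\{m-1,n-1\}$, $F_k(f,g)(x)$ is the determinant of the $(m+n-2k)\times(m+n-2k)$ matrix with rows indexed by $(f,j)$, $j=n-k-1,\dots,0$, followed by $(g,j)$, $j=m-k-1,\dots,0$: the first $m+n-2k-1$ entries of row $(f,j)$ (resp. $(g,j)$) are the coefficients of $x^{m+n-k-1},\dots,x^{k+1}$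 in $x^jf$ (resp. $x^jg$), and the last entry is $x^j$ for row $(f,j)$ and $0$ for row $(g,j)$. (It is the coefficient of $f$ in the Bézout identity $\operatorname{Sres}_k(f,g)=F_k(f,g)f+G_k(f,g)g$.) *)

theory Defs
  imports "HOL-Computational_Algebra.Polynomial" "Jordan_Normal_Form.Determinant"
begin

definition Res :: "'a::comm_ring_1 set \<Rightarrow> 'a set \<Rightarrow> 'a" where
  "Res Y Z = (\<Prod>y\<in>Y. \<Prod>z\<in>Z. (y - z))"

definition Resx :: "'a::comm_ring_1 set \<Rightarrow> 'a poly" where
  "Resx Z = (\<Prod>z\<in>Z. [:- z, 1:])"

definition Syl :: "nat \<Rightarrow> nat \<Rightarrow> 'a::field set \<Rightarrow> 'a set \<Rightarrow> 'a poly" where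
  "Syl p q A B =
     (\<Sum>(A', B') \<in> {A'. A' \<subseteq> A \<and> card A' = p} \<times> {B'. B' \<subseteq> B \<and> card B' = q}.
        smult (Res A' B' * Res (A - A') (B - B') / (Res A' (A - A') * Res B' (B - B')))
              (Resx A' * Resx B'))"

definition shifted_coeff :: "'a::comm_ring_1 poly \<Rightarrow> nat \<Rightarrow> nat \<Rightarrow> 'a" where
  "shifted_coeff h j e = (if j \<le> e then coeff h (e - j) else 0)"

text \<open>The (m+n-2k) x (m+n-2k) matrix defining F_k(f,g); rows 0..n-k-1 are (f,j), j = n-k-1,...,0,
  rows n-k..m+n-2k-1 are (g,j), j = m-k-1,...,0; column c < m+n-2k-1 holds the coefficient of
  x^(m+n-k-1-c); the last column holds x^j for f-rows and 0 for g-rows.\<close>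
definition F_mat :: "nat \<Rightarrow> nat \<Rightarrow> nat \<Rightarrow> 'a::comm_ring_1 poly \<Rightarrow> 'a poly \<Rightarrow> 'a poly mat" where
  "F_mat k m n f g = mat (m + n - 2*k) (m + n - 2*k) (\<lambda>(i, c).
     if i < n - k then
       (let j = n - k - 1 - i in
        if c < m + n - 2*k - 1 then [: shifted_coeff f j (m + n - k - 1 - c) :] else monom 1 j)
     else
       (let j = m - k - 1 - (i - (n - k)) in
        if c < m + n - 2*k - 1 then [: shifted_coeff g j (m + n - k - 1 - c) :] else 0))"

definition F_k :: "nat \<Rightarrow> nat \<Rightarrow> nat \<Rightarrow> 'a::comm_ring_1 poly \<Rightarrow> 'a poly \<Rightarrow> 'a poly" where
  "F_k k m n f g = det (F_mat k m n f g)"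

end

(*
  Write card A = m = s + k and card B = n = r + k, so that d - m = r - 1.  In Syl only A' = A
  contributes, and it becomes, up to sign, f times the sum over (r - 1)-subsets B' of B of
  f(B') / R(B', B - B') * R(x, B').
  On the other side, reducing the f-rows of the matrix defining F_k modulo the g-rows leaves, up to
  sign, an r x r determinant whose rows hold the top coefficients of x^j f mod g.  Multiplying it by
  the Vandermonde determinant of the roots of g evaluates these remainders at the roots, where they
  agree with x^j f.  Expanding the resulting determinant by multilinearity over the rows produces
  exactly the sum above, each term being a quotient of Vandermonde determinants.
*)
theory Submission
  imports Defs
begin

fun vandermonde_prod :: "'a::comm_ring_1 list \<Rightarrow> 'a" where
  "vandermonde_prod [] = 1"
| "vandermonde_prod (p # ps) = (\<Prod>q\<leftarrow>ps. p - q) * vandermonde_prod ps"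

definition vandermonde_mat :: "'a::comm_ring_1 list \<Rightarrow> 'a mat" where
  "vandermonde_mat ps = mat (length ps) (length ps) (\<lambda>(i, j). ps ! i ^ (length ps - 1 - j))"

lemma prod_list_map_conv_prod_nth: "(\<Prod>x\<leftarrow>xs. f x) = (\<Prod>i<length xs. f (xs ! i))"
  by (induction xs) (simp_all del: prod.lessThan_Suc add: prod.lessThan_Suc_shift)

lemma vandermonde_prod_Cons:
  "vandermonde_prod (p # qs) = (-1) ^ length qs * (\<Prod>i<length qs. qs ! i - p) * vandermonde_prod qs"
proof -
  have "(\<Prod>q\<leftarrow>qs. p - q) = (-1) ^ length qs * (\<Prod>q\<leftarrow>qs. q - p)"
    by (induction qs) (simp_all add: algebra_simps)
  then show ?thesis by (simp add: prod_list_map_conv_prod_nth)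
qed

lemma vandermonde_prod_append:
  "vandermonde_prod (xs @ ys) = vandermonde_prod xs * vandermonde_prod ys * (\<Prod>x\<leftarrow>xs. \<Prod>y\<leftarrow>ys. x - y)"
  by (induction xs) (simp_all add: mult_ac)

lemma vandermonde_prod_nonzero: "distinct (ps :: 'a::idom list) \<Longrightarrow> vandermonde_prod ps \<noteq> 0"
  by (induction ps) (auto simp: prod_list_zero_iff)

text \<open>Subtracting \<open>p\<close> times column \<open>j + 1\<close> from column \<open>j\<close> clears the first row of
  the Vandermonde matrix of \<open>p # qs\<close> up to its last entry.\<close>
lemma vandermonde_mat_Cons_column_reduction:
  fixes p :: "'a::comm_ring_1" and qs :: "'a list"
  defines "N \<equiv> Suc (length qs)"
  defines "U \<equiv> mat N N (\<lambda>(i, j). if i = j then 1 else if i = Suc j then - p else 0)"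
  shows "det U = 1"
    and "vandermonde_mat (p # qs) * U = mat N N (\<lambda>(i, j).
           if j < length qs then (p # qs) ! i ^ (length qs - 1 - j) * ((p # qs) ! i - p) else 1)"
    (is "_ * U = ?A")
proof -
  define n where "n = length qs"
  have U: "U \<in> carrier_mat N N" by (simp add: U_def)
  have "diag_mat U = replicate N 1" by (rule nth_equalityI) (auto simp: U_def diag_mat_def)
  then show "det U = 1"
    by (subst det_lower_triangular[OF _ U]) (simp_all add: U_def)
  show "vandermonde_mat (p # qs) * U = ?A"
  proof (rule eq_matI)
    fix i j assume "i < dim_row ?A" "j < dim_col ?A"
    then have i: "i < N" and j: "j < N" by auto
    have "(vandermonde_mat (p # qs) * U) $$ (i, j) = (\<Sum>l<N. vandermonde_mat (p # qs) $$ (i, l) * U $$ (l, j))"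
      using i j U by (simp add: vandermonde_mat_def N_def scalar_prod_def atLeast0LessThan)
    also have "\<dots> = (\<Sum>l\<in>{j, Suc j} \<inter> {..<N}. vandermonde_mat (p # qs) $$ (i, l) * U $$ (l, j))"
      by (rule sum.mono_neutral_right) (use j in \<open>auto simp: U_def\<close>)
    also have "\<dots> = (if j < n then (p # qs) ! i ^ (n - 1 - j) * ((p # qs) ! i - p) else 1)"
    proof (cases "j < n")
      case True
      then have "{j, Suc j} \<inter> {..<N} = {j, Suc j}" "N - 1 - j = Suc (n - 1 - j)" "N - 1 - Suc j = n - 1 - j"
        by (auto simp: N_def n_def)
      then show ?thesis
        using True i by (simp add: vandermonde_mat_def U_def n_def N_def algebra_simps)
    next
      case False
      then have "j = n" "{j, Suc j} \<inter> {..<N} = {j}" using j by (auto simp: N_def n_def)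
      then show ?thesis using i by (simp add: vandermonde_mat_def U_def n_def N_def)
    qed
    finally show "(vandermonde_mat (p # qs) * U) $$ (i, j) = ?A $$ (i, j)"
      using i j by (simp add: n_def)
  qed (auto simp: vandermonde_mat_def N_def U_def)
qed

lemma det_vandermonde_mat: "det (vandermonde_mat ps) = vandermonde_prod ps"
proof (induction ps)
  case Nil
  then show ?case by (simp add: vandermonde_mat_def)
next
  case (Cons p qs)
  define n where "n = length qs"
  define U :: "'a mat" where "U = mat (Suc n) (Suc n) (\<lambda>(i, j). if i = j then 1 else if i = Suc j then - p else 0)"
  define A where "A = vandermonde_mat (p # qs) * U"
  note reduction = vandermonde_mat_Cons_column_reduction[where p = p and qs = qs]
  have A_eq: "A = mat (Suc n) (Suc n) (\<lambda>(i, j). if j < n then (p # qs) ! i ^ (n - 1 - j) * ((p # qs) ! i - p) else 1)"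
    unfolding A_def U_def n_def by (rule reduction(2))
  have A: "A \<in> carrier_mat (Suc n) (Suc n)"
    by (auto simp: A_def U_def vandermonde_mat_def n_def intro!: carrier_matI)
  have det_A: "det A = det (vandermonde_mat (p # qs))"
    using det_mult[of "vandermonde_mat (p # qs)" "Suc n" U] reduction(1)
    by (simp add: A_def U_def vandermonde_mat_def n_def)
  have row0: "A $$ (0, j) = (if j = n then 1 else 0)" if "j < Suc n" for j
    using that by (simp add: A_eq)
  have "det A = (\<Sum>j<Suc n. A $$ (0, j) * cofactor A 0 j)"
    by (rule laplace_expansion_row[OF A]) simp
  also have "\<dots> = (\<Sum>j\<in>{n}. A $$ (0, j) * cofactor A 0 j)"
    by (rule sum.mono_neutral_right) (auto simp: row0)
  also have "\<dots> = (-1) ^ n * det (mat_delete A 0 n)"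
    by (simp add: row0 cofactor_def)
  also have "mat_delete A 0 n = mat\<^sub>r n n (\<lambda>i. (qs ! i - p) \<cdot>\<^sub>v row (vandermonde_mat qs) i)"
    by (rule eq_matI) (use A in \<open>auto simp: mat_delete_def A_eq vandermonde_mat_def n_def mult.commute\<close>)
  also have "det \<dots> = (\<Prod>i\<in>{0..<n}. qs ! i - p) * det (mat\<^sub>r n n (\<lambda>i. row (vandermonde_mat qs) i))"
    by (rule det_rows_mul) (auto simp: vandermonde_mat_def n_def)
  also have "mat\<^sub>r n n (\<lambda>i. row (vandermonde_mat qs) i) = vandermonde_mat qs"
    by (rule eq_matI) (auto simp: vandermonde_mat_def n_def)
  finally show ?case
    using det_A Cons unfolding vandermonde_prod_Cons by (simp add: n_def atLeast0LessThan)
qed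

lemma permutes_nth_list:
  assumes "distinct L" "set L = {0..<N}"
  shows "(\<lambda>i. if i < N then L ! i else i) permutes {0..<N}"
proof -
  have len: "length L = N" using assms distinct_card by fastforce
  have "bij_betw ((!) L) {..<length L} (set L)" by (rule bij_betw_nth) (use assms in auto)
  then have "bij_betw (\<lambda>i. if i < N then L ! i else i) {0..<N} {0..<N}"
    using len assms by (auto intro: bij_betw_cong[THEN iffD1] simp: lessThan_atLeast0)
  then show ?thesis by (rule bij_imp_permutes) auto
qed

definition split_vandermonde_mat :: "nat \<Rightarrow> nat \<Rightarrow> nat set \<Rightarrow> 'a::comm_ring_1 list \<Rightarrow> 'a \<Rightarrow> 'a mat" where
  "split_vandermonde_mat n r S ps x = mat (n + 1) (n + 1) (\<lambda>(l, i).
     if l < n then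
       (if l \<in> S then (if i < r then ps ! l ^ (r - 1 - i) else 0)
        else (if i < r then 0 else ps ! l ^ (n - i)))
     else (if i < r then x ^ (r - 1 - i) else 0))"

lemma split_vandermonde_mat_permute_rows:
  assumes n: "length ps = n" and S: "S \<subseteq> {0..<n}"
    and ins: "distinct ins" "set ins = S" and outs: "distinct outs" "set outs = {0..<n} - S"
    and r: "length ins + 1 = r"
  defines "L \<equiv> ins @ [n] @ outs"
  shows "mat (n + 1) (n + 1) (\<lambda>(i, j). split_vandermonde_mat n r S ps x $$ (L ! i, j)) =
    four_block_mat (vandermonde_mat (map ((!) (ps @ [x])) (ins @ [n]))) (0\<^sub>m r (n + 1 - r))
      (0\<^sub>m (n + 1 - r) r) (vandermonde_mat (map ((!) (ps @ [x])) outs))"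
    (is "?M = four_block_mat ?V1 _ _ ?V2")
proof -
  have "length outs = card ({0..<n} - S)" using outs distinct_card by metis
  moreover have "card S = length ins" using ins distinct_card by metis
  moreover have "finite S" "card S \<le> n" using S finite_subset card_mono[OF _ S] by auto
  ultimately have len_outs: "length outs = n + 1 - r" and rn: "r \<le> n + 1"
    using r S by (simp_all add: card_Diff_subset)
  have ins_nth: "ins ! i \<in> S" "ins ! i < n" if "i < r - 1" for i
    using that r ins S nth_mem[of i ins] by force+
  have outs_nth: "outs ! i \<notin> S" "outs ! i < n" if "i < n + 1 - r" for i
    using that len_outs outs nth_mem[of i outs] by auto
  show ?thesis
  proof (rule eq_matI)
    fix i j assume "i < dim_row (four_block_mat ?V1 (0\<^sub>m r (n + 1 - r)) (0\<^sub>m (n + 1 - r) r) ?V2)"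
      "j < dim_col (four_block_mat ?V1 (0\<^sub>m r (n + 1 - r)) (0\<^sub>m (n + 1 - r) r) ?V2)"
    then have i: "i < n + 1" and j: "j < n + 1" using r rn len_outs by (auto simp: vandermonde_mat_def)
    consider "i < r - 1" | "i = r - 1" | "r \<le> i" by linarith
    then show "?M $$ (i, j) = four_block_mat ?V1 (0\<^sub>m r (n + 1 - r)) (0\<^sub>m (n + 1 - r) r) ?V2 $$ (i, j)"
    proof cases
      case 1
      then have "L ! i = ins ! i" using r by (auto simp: L_def nth_append)
      then show ?thesis using 1 i j ins_nth[OF 1] r len_outs
        by (auto simp: split_vandermonde_mat_def four_block_mat_def vandermonde_mat_def nth_append n)
    next
      case 2
      then have "L ! i = n" using r by (auto simp: L_def nth_append)
      then show ?thesis using 2 i j r len_outs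
        by (auto simp: split_vandermonde_mat_def four_block_mat_def vandermonde_mat_def nth_append n)
    next
      case 3
      then have "L ! i = outs ! (i - r)" using r i by (auto simp: L_def nth_append)
      moreover have "n + 1 - r - 1 - (j - r) = n - j" if "j \<ge> r" using that j by auto
      moreover have "i - r < n + 1 - r" using 3 i by linarith
      ultimately show ?thesis using 3 i j outs_nth[of "i - r"] r len_outs
        by (auto simp: split_vandermonde_mat_def four_block_mat_def vandermonde_mat_def nth_append n)
    qed
  qed (use r rn len_outs in \<open>auto simp: split_vandermonde_mat_def vandermonde_mat_def\<close>)
qed

lemma det_permute_rows_nth:
  assumes "distinct L" "set L = {0..<n}" and A: "A \<in> carrier_mat n n"
  shows "det (mat n n (\<lambda>(i, j). A $$ (L ! i, j))) = signof (\<lambda>i. if i < n then L ! i else i) * det A"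
proof -
  have "mat n n (\<lambda>(i, j). A $$ (L ! i, j)) = mat n n (\<lambda>(i, j). A $$ (if i < n then L ! i else i, j))"
    by (rule eq_matI) auto
  then show ?thesis using det_permute_rows[OF A permutes_nth_list[OF assms(1,2)]] by simp
qed

lemma vandermonde_mat_permute_rows:
  assumes "distinct L" "set L = {0..<length qs}"
  shows "mat (length qs) (length qs) (\<lambda>(i, j). vandermonde_mat qs $$ (L ! i, j)) = vandermonde_mat (map ((!) qs) L)"
proof -
  have len: "length L = length qs" using assms distinct_card by fastforce
  then have "L ! i < length qs" if "i < length qs" for i
    using that assms(2) nth_mem[of i L] by auto
  with len show ?thesis by (intro eq_matI) (simp_all add: vandermonde_mat_def)
qed

text \<open>Both \<open>split_vandermonde_mat n r S ps x\<close> and the Vandermonde matrix of \<open>ps @ [x]\<close>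
  become block diagonal after the same row permutation, which moves the rows in \<open>S\<close> and
  the last row to the top; the two signs cancel.\<close>
lemma det_split_vandermonde_mat_mult:
  fixes ps :: "'a::idom list"
  assumes n: "length ps = n" and S: "S \<subseteq> {0..<n}" and r: "card S + 1 = r"
  shows "det (split_vandermonde_mat n r S ps x) *
      ((\<Prod>l\<in>S. \<Prod>l'\<in>{0..<n} - S. ps ! l - ps ! l') * (\<Prod>l'\<in>{0..<n} - S. x - ps ! l'))
    = vandermonde_prod (ps @ [x])"
proof -
  define Sc where "Sc = {0..<n} - S"
  define ins where "ins = sorted_list_of_set S"
  define outs where "outs = sorted_list_of_set Sc"
  define L where "L = ins @ [n] @ outs"
  define \<sigma> :: 'a where "\<sigma> = signof (\<lambda>i. if i < n + 1 then L ! i else i)"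
  define qs where "qs = ps @ [x]"
  define xs where "xs = map ((!) qs) (ins @ [n])"
  define ys where "ys = map ((!) qs) outs"
  have "finite S" using S finite_subset by blast
  then have ins: "distinct ins" "set ins = S" "length ins + 1 = r" using r by (auto simp: ins_def)
  have outs: "distinct outs" "set outs = Sc" by (auto simp: outs_def Sc_def)
  have L: "distinct L" "set L = {0..<n + 1}" using ins outs S by (auto simp: L_def Sc_def)
  have M: "split_vandermonde_mat n r S ps x \<in> carrier_mat (n + 1) (n + 1)"
    by (simp add: split_vandermonde_mat_def)
  have "\<sigma> * det (split_vandermonde_mat n r S ps x) =
      det (mat (n + 1) (n + 1) (\<lambda>(i, j). split_vandermonde_mat n r S ps x $$ (L ! i, j)))"
    unfolding det_permute_rows_nth[OF L M] \<sigma>_def ..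
  also have "mat (n + 1) (n + 1) (\<lambda>(i, j). split_vandermonde_mat n r S ps x $$ (L ! i, j)) =
      four_block_mat (vandermonde_mat xs) (0\<^sub>m r (n + 1 - r)) (0\<^sub>m (n + 1 - r) r) (vandermonde_mat ys)"
    unfolding L_def xs_def ys_def qs_def
    by (rule split_vandermonde_mat_permute_rows[OF n S ins(1,2) outs[unfolded Sc_def] ins(3)])
  also have "det (four_block_mat (vandermonde_mat xs) (0\<^sub>m r (n + 1 - r)) (0\<^sub>m (n + 1 - r) r) (vandermonde_mat ys)) =
      det (vandermonde_mat xs) * det (vandermonde_mat ys)"
    using ins(3) distinct_card[OF L(1)] L(2)
    by (intro det_four_block_mat_lower_left_zero) (auto simp: vandermonde_mat_def xs_def ys_def L_def)
  finally have M_perm: "\<sigma> * det (split_vandermonde_mat n r S ps x) = vandermonde_prod xs * vandermonde_prod ys"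
    by (simp add: det_vandermonde_mat)
  have len_qs: "length qs = n + 1" by (simp add: qs_def n)
  have V: "vandermonde_mat qs \<in> carrier_mat (n + 1) (n + 1)" by (simp add: vandermonde_mat_def len_qs)
  have "\<sigma> * vandermonde_prod qs = det (mat (n + 1) (n + 1) (\<lambda>(i, j). vandermonde_mat qs $$ (L ! i, j)))"
    unfolding det_permute_rows_nth[OF L V] \<sigma>_def det_vandermonde_mat ..
  also have "mat (n + 1) (n + 1) (\<lambda>(i, j). vandermonde_mat qs $$ (L ! i, j)) = vandermonde_mat (map ((!) qs) L)"
    using vandermonde_mat_permute_rows[of L qs] L unfolding len_qs by blast
  also have "map ((!) qs) L = xs @ ys" by (simp add: xs_def ys_def L_def)
  also have "det (vandermonde_mat (xs @ ys)) = \<sigma> * det (split_vandermonde_mat n r S ps x) * (\<Prod>a\<leftarrow>xs. \<Prod>c\<leftarrow>ys. a - c)"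
    by (simp add: det_vandermonde_mat vandermonde_prod_append M_perm)
  finally have "\<sigma> * \<sigma> * vandermonde_prod qs = \<sigma> * \<sigma> * det (split_vandermonde_mat n r S ps x) * (\<Prod>a\<leftarrow>xs. \<Prod>c\<leftarrow>ys. a - c)"
    by (simp add: mult.assoc)
  moreover have "\<sigma> * \<sigma> = 1"
    unfolding \<sigma>_def by (metis of_int_1 of_int_mult sign_idempotent)
  ultimately have V_eq: "vandermonde_prod qs = det (split_vandermonde_mat n r S ps x) * (\<Prod>a\<leftarrow>xs. \<Prod>c\<leftarrow>ys. a - c)"
    by simp
  have xs': "xs = map ((!) ps) ins @ [x]" and ys': "ys = map ((!) ps) outs"
    using ins outs S n by (auto simp: xs_def ys_def qs_def Sc_def nth_append intro!: map_cong)
  have "(\<Prod>c\<leftarrow>ys. a - c) = (\<Prod>l'\<in>Sc. a - ps ! l')" for a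
    using prod.distinct_set_conv_list[OF outs(1), of "\<lambda>l'. a - ps ! l'"] outs(2) by (simp add: ys' o_def)
  then have "(\<Prod>a\<leftarrow>xs. \<Prod>c\<leftarrow>ys. a - c) = (\<Prod>l\<in>S. \<Prod>l'\<in>Sc. ps ! l - ps ! l') * (\<Prod>l'\<in>Sc. x - ps ! l')"
    using prod.distinct_set_conv_list[OF ins(1), of "\<lambda>l. \<Prod>l'\<in>Sc. ps ! l - ps ! l'"] ins(2)
    by (simp add: xs' o_def)
  then show ?thesis using V_eq by (simp add: qs_def Sc_def)
qed

lemma det_split_vandermonde_mat:
  fixes ps :: "'a::idom list"
  assumes n: "length ps = n" and S: "S \<subseteq> {0..<n}" and r: "card S + 1 = r" and x: "x \<notin> set ps"
  shows "det (split_vandermonde_mat n r S ps x) * (\<Prod>l\<in>S. \<Prod>l'\<in>{0..<n} - S. ps ! l - ps ! l')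
    = (-1) ^ n * vandermonde_prod ps * (\<Prod>l\<in>S. x - ps ! l)"
proof -
  define Sc where "Sc = {0..<n} - S"
  define Q where "Q = (\<Prod>l\<in>Sc. x - ps ! l)"
  have finS: "finite S" using S finite_subset by blast
  have "Q \<noteq> 0" using x n by (auto simp: Q_def Sc_def)
  have "card S \<le> n" using card_mono[OF _ S] by simp
  then have card_Sc: "card S + card Sc = n" using S finS by (simp add: Sc_def card_Diff_subset)
  have split: "{..<n} = S \<union> Sc" using S by (auto simp: Sc_def)
  have "(\<Prod>l<n. ps ! l - x) = (\<Prod>l\<in>S. ps ! l - x) * (\<Prod>l\<in>Sc. ps ! l - x)"
    unfolding split by (rule prod.union_disjoint) (auto simp: Sc_def finS)
  also have "\<dots> = (-1) ^ n * (\<Prod>l\<in>S. x - ps ! l) * Q"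
    using prod_uminus[of "\<lambda>l. x - ps ! l" S] prod_uminus[of "\<lambda>l. x - ps ! l" Sc] card_Sc
    by (simp add: Q_def card_Sc[symmetric] power_add mult_ac)
  finally have "vandermonde_prod (ps @ [x]) = (-1) ^ n * vandermonde_prod ps * (\<Prod>l\<in>S. x - ps ! l) * Q"
    by (simp add: vandermonde_prod_append prod_list_map_conv_prod_nth n mult_ac)
  with det_split_vandermonde_mat_mult[OF n S r, of x] \<open>Q \<noteq> 0\<close> show ?thesis
    by (simp add: Q_def Sc_def mult.assoc[symmetric])
qed

text \<open>Unless \<open>card S + 1 = r\<close>, every permutation meets a zero entry of
  \<open>split_vandermonde_mat n r S ps x\<close>: too many rows (those in \<open>S\<close> and the last one) or too
  few rows (those outside \<open>S\<close>) would have to be matched with the first \<open>r\<close> columns.\<close>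
lemma det_split_vandermonde_mat_eq_0:
  assumes S: "S \<subseteq> {0..<n}" and r: "card S + 1 \<noteq> r" "r \<le> n + 1"
  shows "det (split_vandermonde_mat n r S ps x) = 0"
proof -
  define M where "M = split_vandermonde_mat n r S ps x"
  have finS: "finite S" using S finite_subset by blast
  have zero_entry: "\<exists>i<n + 1. M $$ (i, p i) = 0" if p: "p permutes {0..<n + 1}" for p
  proof -
    have inj: "inj_on p X" for X using permutes_inj_on[OF p] by (simp add: inj_on_subset)
    have p_lt: "p i < n + 1" if "i < n + 1" for i using permutes_in_image[OF p] that by auto
    show ?thesis
    proof (cases "card S + 1 > r")
      case True
      have "n \<notin> S" using S by auto
      then have "card (p ` insert n S) = card S + 1"
        unfolding card_image[OF inj] using finS by simp
      then have "\<not> p ` insert n S \<subseteq> {0..<r}"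
        using True card_mono[of "{0..<r}" "p ` insert n S"] by auto
      then obtain i where "i \<in> insert n S" "\<not> p i < r" by (auto simp: image_subset_iff)
      then show ?thesis using S p_lt[of i] by (intro exI[of _ i]) (auto simp: M_def split_vandermonde_mat_def)
    next
      case False
      define J where "J = {0..<n} - S"
      have "card S \<le> n" using card_mono[OF _ S] by simp
      then have "card (p ` J) = n - card S" using finS S by (simp add: card_image[OF inj] J_def card_Diff_subset)
      then have "\<not> p ` J \<subseteq> {r..<n + 1}"
        using False r card_mono[of "{r..<n + 1}" "p ` J"] by auto
      then obtain i where "i \<in> J" "\<not> (r \<le> p i \<and> p i < n + 1)" by (auto simp: image_subset_iff)
      then show ?thesis using p_lt[of i] by (intro exI[of _ i]) (auto simp: M_def split_vandermonde_mat_def J_def)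
    qed
  qed
  have "det M = (\<Sum>p\<in>{p. p permutes {0..<n + 1}}. signof p * (\<Prod>i=0..<n + 1. M $$ (i, p i)))"
    by (rule det_def') (simp add: M_def split_vandermonde_mat_def)
  also have "\<dots> = 0"
  proof (rule sum.neutral, rule ballI)
    fix p assume "p \<in> {p. p permutes {0..<n + 1}}"
    with zero_entry obtain i where "i < n + 1" "M $$ (i, p i) = 0" by blast
    then have "(\<Prod>i=0..<n + 1. M $$ (i, p i)) = 0" by (intro prod_zero) auto
    then show "signof p * (\<Prod>i=0..<n + 1. M $$ (i, p i)) = 0" by simp
  qed
  finally show ?thesis by (simp add: M_def)
qed

lemma det_mat_add_row:
  assumes "k < n"
  shows "det (mat n n (\<lambda>(i, j). if i = k then a j + b j else c i j)) =
    det (mat n n (\<lambda>(i, j). if i = k then a j else c i j)) + det (mat n n (\<lambda>(i, j). if i = k then b j else c i j))"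
proof -
  have as_rows: "mat n n (\<lambda>(i, j). if i = k then g j else c i j) = mat\<^sub>r n n (\<lambda>i. if i = k then vec n g else vec n (c i))" for g
    by (rule eq_matI) auto
  have "mat n n (\<lambda>(i, j). if i = k then a j + b j else c i j) = mat\<^sub>r n n (\<lambda>i. if i = k then vec n a + vec n b else vec n (c i))"
    by (rule eq_matI) auto
  then show ?thesis unfolding as_rows
    by (simp only:) (rule det_row_add, use assms in auto)
qed

lemma det_mat_add_rows:
  assumes "finite Z" "Z \<subseteq> {0..<n}"
  shows "det (mat n n (\<lambda>(i, j). if i \<in> Z then u i j + v i j else c i j)) =
    (\<Sum>S\<in>Pow Z. det (mat n n (\<lambda>(i, j). if i \<in> S then u i j else if i \<in> Z then v i j else c i j)))"
  using assms
proof (induction Z arbitrary: c rule: finite_induct)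
  case empty
  then show ?case by simp
next
  case (insert z Z)
  define D where "D = (\<lambda>S. det (mat n n (\<lambda>(i, j). if i \<in> S then u i j else if i \<in> insert z Z then v i j else c i j)))"
  define c' where "c' = (\<lambda>i j. if i = z then u z j + v z j else c i j)"
  have "mat n n (\<lambda>(i, j). if i \<in> insert z Z then u i j + v i j else c i j)
      = mat n n (\<lambda>(i, j). if i \<in> Z then u i j + v i j else c' i j)"
    by (rule eq_matI) (auto simp: c'_def)
  then have "det (mat n n (\<lambda>(i, j). if i \<in> insert z Z then u i j + v i j else c i j))
      = (\<Sum>S\<in>Pow Z. det (mat n n (\<lambda>(i, j). if i \<in> S then u i j else if i \<in> Z then v i j else c' i j)))"
    using insert by simp
  also have "\<dots> = (\<Sum>S\<in>Pow Z. D (insert z S) + D S)"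
  proof (rule sum.cong[OF refl])
    fix S assume S: "S \<in> Pow Z"
    define c'' where "c'' = (\<lambda>i j. if i \<in> S then u i j else if i \<in> Z then v i j else c i j)"
    have "z \<notin> S" "z < n" using S insert by auto
    then have "mat n n (\<lambda>(i, j). if i \<in> S then u i j else if i \<in> Z then v i j else c' i j)
         = mat n n (\<lambda>(i, j). if i = z then u z j + v z j else c'' i j)"
      and "mat n n (\<lambda>(i, j). if i = z then u z j else c'' i j) =
         mat n n (\<lambda>(i, j). if i \<in> insert z S then u i j else if i \<in> insert z Z then v i j else c i j)"
      and "mat n n (\<lambda>(i, j). if i = z then v z j else c'' i j) =
         mat n n (\<lambda>(i, j). if i \<in> S then u i j else if i \<in> insert z Z then v i j else c i j)"
      using insert by (auto intro!: eq_matI simp: c'_def c''_def)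
    with det_mat_add_row[OF \<open>z < n\<close>, of "u z" "v z" c'']
    show "det (mat n n (\<lambda>(i, j). if i \<in> S then u i j else if i \<in> Z then v i j else c' i j))
      = D (insert z S) + D S"
      unfolding D_def by simp
  qed
  also have "\<dots> = (\<Sum>S\<in>insert z ` Pow Z. D S) + (\<Sum>S\<in>Pow Z. D S)"
  proof -
    have "inj_on (insert z) (Pow Z)" using insert(2) by (intro inj_onI) (metis PowD insert_ident subsetD)
    then show ?thesis by (simp add: sum.distrib sum.reindex)
  qed
  also have "\<dots> = (\<Sum>S\<in>Pow (insert z Z). D S)"
  proof -
    have "Pow Z \<inter> insert z ` Pow Z = {}" using insert(2) by auto
    then show ?thesis using insert(1) by (simp add: Pow_insert sum.union_disjoint add.commute)
  qed
  finally show ?case unfolding D_def .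
qed

lemma det_mat_scale_rows:
  "det (mat n n (\<lambda>(i, j). d i * f i j)) = (\<Prod>i<n. d i) * det (mat n n (\<lambda>(i, j). f i j))"
proof -
  have "mat n n (\<lambda>(i, j). d i * f i j) = mat\<^sub>r n n (\<lambda>i. d i \<cdot>\<^sub>v vec n (\<lambda>j. f i j))"
    and "mat n n (\<lambda>(i, j). f i j) = mat\<^sub>r n n (\<lambda>i. vec n (\<lambda>j. f i j))"
    by (auto intro!: eq_matI)
  then show ?thesis using det_rows_mul[of "\<lambda>i. vec n (\<lambda>j. f i j)" n d]
    by (simp add: atLeast0LessThan)
qed

definition weighted_vandermonde_mat :: "nat \<Rightarrow> nat \<Rightarrow> (nat \<Rightarrow> 'a) \<Rightarrow> 'a::comm_ring_1 list \<Rightarrow> 'a \<Rightarrow> 'a mat" where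
  "weighted_vandermonde_mat n r w ps x = mat (n + 1) (n + 1) (\<lambda>(l, i).
     if l < n then (if i < r then w l * ps ! l ^ (r - 1 - i) else ps ! l ^ (n - i))
     else (if i < r then x ^ (r - 1 - i) else 0))"

text \<open>Expand by multilinearity, splitting each of the first \<open>n\<close> rows into its first \<open>r\<close> and its
  last \<open>n + 1 - r\<close> entries; only the choices with \<open>card S + 1 = r\<close> have nonzero determinant.\<close>
lemma det_weighted_vandermonde_mat_expand:
  assumes "r \<le> n + 1"
  shows "det (weighted_vandermonde_mat n r w ps x) =
    (\<Sum>S | S \<subseteq> {0..<n} \<and> card S + 1 = r. (\<Prod>l\<in>S. w l) * det (split_vandermonde_mat n r S ps x))"
proof -
  define u where "u = (\<lambda>l i. if i < r then w l * ps ! l ^ (r - 1 - i) else 0)"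
  define v where "v = (\<lambda>l i. if i < r then 0 else ps ! l ^ (n - i))"
  define c where "c = (\<lambda>(l::nat) i. if i < r then x ^ (r - 1 - i) else 0)"
  have "weighted_vandermonde_mat n r w ps x =
        mat (n + 1) (n + 1) (\<lambda>(l, i). if l \<in> {0..<n} then u l i + v l i else c l i)"
    by (rule eq_matI) (auto simp: weighted_vandermonde_mat_def u_def v_def c_def)
  also have "det \<dots> = (\<Sum>S\<in>Pow {0..<n}.
      det (mat (n + 1) (n + 1) (\<lambda>(l, i). if l \<in> S then u l i else if l \<in> {0..<n} then v l i else c l i)))"
    by (rule det_mat_add_rows) auto
  also have "\<dots> = (\<Sum>S\<in>Pow {0..<n}. (\<Prod>l\<in>S. w l) * det (split_vandermonde_mat n r S ps x))"
  proof (rule sum.cong[OF refl])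
    fix S assume S: "S \<in> Pow {0..<n}"
    define d where "d = (\<lambda>l. if l \<in> S then w l else 1)"
    have "mat (n + 1) (n + 1) (\<lambda>(l, i). if l \<in> S then u l i else if l \<in> {0..<n} then v l i else c l i)
        = mat (n + 1) (n + 1) (\<lambda>(l, i). d l * (split_vandermonde_mat n r S ps x $$ (l, i)))"
      by (rule eq_matI) (use S in \<open>auto simp: u_def v_def c_def d_def split_vandermonde_mat_def\<close>)
    also have "det \<dots> = (\<Prod>l<n + 1. d l) * det (mat (n + 1) (n + 1) (\<lambda>(l, i). split_vandermonde_mat n r S ps x $$ (l, i)))"
      by (rule det_mat_scale_rows)
    also have "mat (n + 1) (n + 1) (\<lambda>(l, i). split_vandermonde_mat n r S ps x $$ (l, i)) = split_vandermonde_mat n r S ps x"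
      by (rule eq_matI) (auto simp: split_vandermonde_mat_def)
    also have "(\<Prod>l<n + 1. d l) = (\<Prod>l\<in>S. w l)"
      using S by (subst prod.mono_neutral_right[of "{..<n + 1}" S]) (auto simp: d_def)
    finally show "det (mat (n + 1) (n + 1) (\<lambda>(l, i). if l \<in> S then u l i else if l \<in> {0..<n} then v l i else c l i))
        = (\<Prod>l\<in>S. w l) * det (split_vandermonde_mat n r S ps x)" .
  qed
  also have "\<dots> = (\<Sum>S | S \<subseteq> {0..<n} \<and> card S + 1 = r. (\<Prod>l\<in>S. w l) * det (split_vandermonde_mat n r S ps x))"
    by (rule sum.mono_neutral_right) (auto simp: det_split_vandermonde_mat_eq_0[OF _ _ assms])
  finally show ?thesis .
qed

lemma det_weighted_vandermonde_mat_const_poly: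
  fixes bs :: "'a::field list"
  assumes dist: "distinct bs" and n: "length bs = n" and r: "r \<le> n + 1"
  shows "det (weighted_vandermonde_mat n r (\<lambda>l. [:w l:]) (map (\<lambda>b. [:b:]) bs) (monom 1 1)) =
    (-1) ^ n * vandermonde_prod (map (\<lambda>b. [:b:]) bs) *
    (\<Sum>S | S \<subseteq> {0..<n} \<and> card S + 1 = r.
       smult ((\<Prod>l\<in>S. w l) / (\<Prod>l\<in>S. \<Prod>l'\<in>{0..<n} - S. bs ! l - bs ! l')) (\<Prod>l\<in>S. [:- bs ! l, 1:]))"
proof -
  define ps where "ps = map (\<lambda>b. [:b:]) bs"
  define V where "V = vandermonde_prod ps"
  have ps: "length ps = n" "\<And>l. l < n \<Longrightarrow> ps ! l = [:bs ! l:]" by (simp_all add: ps_def n)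
  have x: "monom 1 1 \<notin> set ps" by (auto simp: ps_def dest: arg_cong[where f = "\<lambda>p. coeff p 1"])
  have "(\<Prod>l\<in>S. [:w l:]) * det (split_vandermonde_mat n r S ps (monom 1 1)) =
      (-1) ^ n * V * smult ((\<Prod>l\<in>S. w l) / (\<Prod>l\<in>S. \<Prod>l'\<in>{0..<n} - S. bs ! l - bs ! l')) (\<Prod>l\<in>S. [:- bs ! l, 1:])"
    if S: "S \<subseteq> {0..<n}" "card S + 1 = r" for S
  proof -
    define \<rho> where "\<rho> = (\<Prod>l\<in>S. \<Prod>l'\<in>{0..<n} - S. bs ! l - bs ! l')"
    have "finite S" using S finite_subset by blast
    moreover have "bs ! l \<noteq> bs ! l'" if "l \<in> S" "l' \<in> {0..<n} - S" for l l'
      using that S dist n by (auto simp: nth_eq_iff_index_eq)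
    ultimately have "\<rho> \<noteq> 0" by (simp add: \<rho>_def prod_zero_iff)
    have "(\<Prod>l\<in>S. \<Prod>l'\<in>{0..<n} - S. ps ! l - ps ! l') = [:\<rho>:]"
      using S by (simp add: \<rho>_def ps(2) prod_to_poly subset_iff)
    moreover have "(\<Prod>l\<in>S. monom 1 1 - ps ! l) = (\<Prod>l\<in>S. [:- bs ! l, 1:])"
      using S by (intro prod.cong) (auto simp: ps(2) monom_Suc)
    ultimately have "smult \<rho> (det (split_vandermonde_mat n r S ps (monom 1 1))) = (-1) ^ n * V * (\<Prod>l\<in>S. [:- bs ! l, 1:])"
      using det_split_vandermonde_mat[OF ps(1) S x] by (simp add: V_def mult.commute)
    moreover have "det (split_vandermonde_mat n r S ps (monom 1 1)) =
        smult (1 / \<rho>) (smult \<rho> (det (split_vandermonde_mat n r S ps (monom 1 1))))"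
      using \<open>\<rho> \<noteq> 0\<close> by simp
    ultimately show ?thesis by (simp add: \<rho>_def prod_to_poly mult_ac)
  qed
  then show ?thesis
    unfolding ps_def[symmetric] V_def[symmetric] det_weighted_vandermonde_mat_expand[OF r]
    by (simp add: sum_distrib_left)
qed

definition remainder_mat :: "nat \<Rightarrow> nat \<Rightarrow> 'a::field poly \<Rightarrow> 'a poly \<Rightarrow> 'a poly mat" where
  "remainder_mat r n f g = mat r r (\<lambda>(i, c).
     if c < r - 1 then [:coeff (monom 1 (r - 1 - i) * f mod g) (n - 1 - c):] else monom 1 (r - 1 - i))"

definition extended_remainder_mat :: "nat \<Rightarrow> nat \<Rightarrow> 'a::field poly \<Rightarrow> 'a poly \<Rightarrow> 'a poly mat" where
  "extended_remainder_mat r n f g = mat (n + 1) (n + 1) (\<lambda>(i, c).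
     if i < r then (if c < n then [:coeff (monom 1 (r - 1 - i) * f mod g) (n - 1 - c):] else monom 1 (r - 1 - i))
     else (if c + 1 = i then 1 else 0))"

lemma det_extended_remainder_mat:
  assumes "1 \<le> r"
  shows "det (extended_remainder_mat r (r + k) f g) = (-1) ^ (k + 1) * det (remainder_mat r (r + k) f g)"
proof -
  define E where "E = extended_remainder_mat r (r + k) f g"
  have E: "E \<in> carrier_mat (r + k + 1) (r + k + 1)" by (simp add: E_def extended_remainder_mat_def)
  have "det E = (-1) ^ ((k + 1) * 1) * det (mat (r + k + 1) (r + k + 1)
      (\<lambda>(i, j). E $$ (i, if j < r - 1 then j else if j < r - 1 + 1 then j + (k + 1) else j - 1)))"
    by (rule det_swap_final_cols[OF E]) (use assms in auto)
  also have "mat (r + k + 1) (r + k + 1)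
      (\<lambda>(i, j). E $$ (i, if j < r - 1 then j else if j < r - 1 + 1 then j + (k + 1) else j - 1))
    = four_block_mat (remainder_mat r (r + k) f g)
        (mat r (k + 1) (\<lambda>(i, c). [:coeff (monom 1 (r - 1 - i) * f mod g) (k - c):])) (0\<^sub>m (k + 1) r) (1\<^sub>m (k + 1))"
    by (rule eq_matI) (use assms in \<open>auto simp: E_def extended_remainder_mat_def remainder_mat_def four_block_mat_def add.commute[of k r]\<close>)
  also have "det \<dots> = det (remainder_mat r (r + k) f g) * det (1\<^sub>m (k + 1) :: 'a poly mat)"
    by (rule det_four_block_mat_lower_left_zero) (auto simp: remainder_mat_def)
  finally show ?thesis by (simp add: E_def)
qed

lemma poly_eq_sum_coeff_rev:
  fixes p :: "'a::comm_ring_1 poly"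
  assumes "degree p < n"
  shows "poly p b = (\<Sum>c<n. coeff p (n - Suc c) * b ^ (n - Suc c))"
proof -
  have "poly p b = (\<Sum>e<n. coeff p e * b ^ e)"
    unfolding poly_altdef by (rule sum.mono_neutral_left) (use assms in \<open>auto simp: coeff_eq_0\<close>)
  then show ?thesis using sum.nat_diff_reindex[of "\<lambda>e. coeff p e * b ^ e" n] by simp
qed

text \<open>Multiplying by the transposed Vandermonde matrix of the roots \<open>bs\<close> of \<open>g\<close> evaluates the
  coefficient rows of \<open>extended_remainder_mat\<close> at those roots, where \<open>x ^ (r - 1 - i) * f mod g\<close>
  agrees with \<open>x ^ (r - 1 - i) * f\<close>.\<close>
lemma extended_remainder_mat_mult_vandermonde:
  fixes f g :: "'a::field poly"
  assumes n: "length bs = n" and roots: "\<forall>b\<in>set bs. poly g b = 0"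
    and g: "degree g = n" and r: "1 \<le> r" "r \<le> n"
  defines "T \<equiv> four_block_mat (transpose_mat (vandermonde_mat (map (\<lambda>b. [:b:]) bs))) (0\<^sub>m n 1) (0\<^sub>m 1 n) (1\<^sub>m 1)"
  shows "extended_remainder_mat r n f g * T =
    transpose_mat (weighted_vandermonde_mat n r (\<lambda>l. [:poly f (bs ! l):]) (map (\<lambda>b. [:b:]) bs) (monom 1 1))"
    (is "?E * T = transpose_mat ?W")
proof -
  define p where "p = (\<lambda>i. monom 1 (r - 1 - i) * f mod g)"
  have "g \<noteq> 0" using g r by auto
  then have deg_p: "degree (p i) < n" for i
    using degree_mod_less[of g "monom 1 (r - 1 - i) * f"] g r by (auto simp: p_def)
  have T: "T $$ (c, l) = (if c < n \<and> l < n then [:bs ! l ^ (n - 1 - c):] else if c = n \<and> l = n then 1 else 0)"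
    if "c < n + 1" "l < n + 1" for c l
    using that n by (auto simp: T_def four_block_mat_def vandermonde_mat_def poly_const_pow)
  show ?thesis
  proof (rule eq_matI)
    fix i l assume "i < dim_row (transpose_mat ?W)" "l < dim_col (transpose_mat ?W)"
    then have i: "i < n + 1" and l: "l < n + 1" by (auto simp: weighted_vandermonde_mat_def)
    have "(?E * T) $$ (i, l) = (\<Sum>c<n. ?E $$ (i, c) * T $$ (c, l)) + ?E $$ (i, n) * T $$ (n, l)"
      using i l n by (simp add: T_def extended_remainder_mat_def scalar_prod_def atLeast0LessThan vandermonde_mat_def)
    also have "\<dots> = ?W $$ (l, i)"
    proof (cases "l < n")
      case l_lt: True
      show ?thesis
      proof (cases "i < r")
        case True
        have "(\<Sum>c<n. ?E $$ (i, c) * T $$ (c, l)) = [:\<Sum>c<n. coeff (p i) (n - Suc c) * bs ! l ^ (n - Suc c):]"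
          using True l_lt i by (simp add: extended_remainder_mat_def T p_def sum_to_poly mult.commute)
        also have "(\<Sum>c<n. coeff (p i) (n - Suc c) * bs ! l ^ (n - Suc c)) = poly (p i) (bs ! l)"
          by (rule poly_eq_sum_coeff_rev[OF deg_p, symmetric])
        also have "\<dots> = bs ! l ^ (r - 1 - i) * poly f (bs ! l)"
          using roots l_lt n by (simp add: p_def poly_mod poly_monom)
        finally show ?thesis using True l_lt i n
          by (simp add: extended_remainder_mat_def T weighted_vandermonde_mat_def poly_const_pow mult.commute)
      next
        case False
        have "(\<Sum>c<n. ?E $$ (i, c) * T $$ (c, l)) = (\<Sum>c\<in>{i - 1}. ?E $$ (i, c) * T $$ (c, l))"
          by (rule sum.mono_neutral_right) (use False i r in \<open>auto simp: extended_remainder_mat_def\<close>)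
        then show ?thesis using False l_lt i r n
          by (simp add: extended_remainder_mat_def T weighted_vandermonde_mat_def poly_const_pow Suc_diff_le)
      qed
    next
      case False
      then have "l = n" using l by simp
      moreover have "(\<Sum>c<n. ?E $$ (i, c) * T $$ (c, l)) = 0"
        by (rule sum.neutral) (use \<open>l = n\<close> in \<open>auto simp: T\<close>)
      ultimately show ?thesis using i
        by (simp add: extended_remainder_mat_def T weighted_vandermonde_mat_def monom_power)
    qed
    finally show "(?E * T) $$ (i, l) = transpose_mat ?W $$ (i, l)"
      using i l by (simp add: weighted_vandermonde_mat_def)
  qed (use n in \<open>auto simp: T_def extended_remainder_mat_def weighted_vandermonde_mat_def vandermonde_mat_def\<close>)
qed

lemma det_remainder_mat_mult_vandermonde:
  fixes f g :: "'a::field poly"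
  assumes n: "length bs = r + k" and roots: "\<forall>b\<in>set bs. poly g b = 0"
    and g: "degree g = r + k" and r: "1 \<le> r"
  shows "(-1) ^ (k + 1) * det (remainder_mat r (r + k) f g) * vandermonde_prod (map (\<lambda>b. [:b:]) bs) =
    det (weighted_vandermonde_mat (r + k) r (\<lambda>l. [:poly f (bs ! l):]) (map (\<lambda>b. [:b:]) bs) (monom 1 1))"
proof -
  define n where "n = r + k"
  define V where "V = vandermonde_mat (map (\<lambda>b. [:b:]) bs)"
  define T where "T = four_block_mat (transpose_mat V) (0\<^sub>m n 1) (0\<^sub>m 1 n) (1\<^sub>m 1)"
  define W where "W = weighted_vandermonde_mat n r (\<lambda>l. [:poly f (bs ! l):]) (map (\<lambda>b. [:b:]) bs) (monom 1 1)"
  have V: "V \<in> carrier_mat n n" by (simp add: V_def vandermonde_mat_def n n_def)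
  have E: "extended_remainder_mat r n f g \<in> carrier_mat (n + 1) (n + 1)" by (simp add: extended_remainder_mat_def)
  have T: "T \<in> carrier_mat (n + 1) (n + 1)"
    unfolding T_def by (rule four_block_carrier_mat) (use V in auto)
  have "det T = det (transpose_mat V) * det (1\<^sub>m 1 :: 'a poly mat)"
    unfolding T_def by (rule det_four_block_mat_lower_left_zero) (use V in auto)
  then have det_T: "det T = vandermonde_prod (map (\<lambda>b. [:b:]) bs)"
    unfolding det_transpose[OF V] by (simp add: V_def det_vandermonde_mat)
  have "W \<in> carrier_mat (n + 1) (n + 1)" by (simp add: W_def weighted_vandermonde_mat_def)
  then have "det W = det (transpose_mat W)" by (rule det_transpose[symmetric])
  also have "transpose_mat W = extended_remainder_mat r n f g * T"
    unfolding W_def T_def V_def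
    by (rule extended_remainder_mat_mult_vandermonde[symmetric]) (use n roots g r in \<open>auto simp: n_def\<close>)
  also have "det \<dots> = det (extended_remainder_mat r n f g) * det T" by (rule det_mult[OF E T])
  finally show ?thesis
    using det_extended_remainder_mat[OF r, of k f g] by (simp add: det_T W_def n_def)
qed

lemma degree_div_add_degree_le:
  fixes a b :: "'a::field poly"
  assumes "b \<noteq> 0"
  shows "degree (a div b) + degree b \<le> degree a \<or> a div b = 0"
proof (cases "a div b = 0")
  case False
  have deg_mult: "degree (a div b * b) = degree (a div b) + degree b"
    using False assms by (simp add: degree_mult_eq)
  have "degree (a mod b) < degree (a div b * b) \<or> a mod b = 0"
    using degree_mod_less[OF assms, of a] deg_mult by auto
  then have "degree a = degree (a div b * b)"
  proof
    assume "degree (a mod b) < degree (a div b * b)"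
    from degree_add_eq_left[OF this] show ?thesis by simp
  qed (use div_mult_mod_eq[of a b] in simp)
  then show ?thesis using deg_mult by simp
qed simp

lemma coeff_mult_eq_sum_shifted_coeff:
  fixes q g :: "'a::comm_ring_1 poly"
  assumes "degree q < s \<or> q = 0"
  shows "coeff (q * g) e = (\<Sum>t<s. coeff q t * shifted_coeff g t e)"
proof -
  have "coeff (q * g) e = (\<Sum>t\<le>e. coeff q t * coeff g (e - t))" by (rule coeff_mult)
  also have "\<dots> = (\<Sum>t\<in>{..e} \<union> {..<s}. coeff q t * shifted_coeff g t e)"
    by (rule sum.mono_neutral_cong_left) (use assms in \<open>auto simp: shifted_coeff_def coeff_eq_0\<close>)
  also have "\<dots> = (\<Sum>t<s. coeff q t * shifted_coeff g t e)"
    by (rule sum.mono_neutral_cong_right) (use assms in \<open>auto simp: shifted_coeff_def coeff_eq_0\<close>)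
  finally show ?thesis .
qed

lemma shifted_coeff_eq_coeff_monom_mult: "shifted_coeff h j e = coeff (monom 1 j * h) e"
  by (simp add: shifted_coeff_def coeff_monom_mult)

lemma F_mat_carrier: "F_mat k (s + k) (r + k) f g \<in> carrier_mat (r + s) (r + s)"
  by (simp add: F_mat_def add.commute)

lemma F_mat_nth:
  assumes "i < r + s" "c < r + s"
  shows "F_mat k (s + k) (r + k) f g $$ (i, c) =
    (if i < r then (if c < r + s - 1 then [:shifted_coeff f (r - 1 - i) (s + r + k - 1 - c):] else monom 1 (r - 1 - i))
     else (if c < r + s - 1 then [:shifted_coeff g (s - 1 - (i - r)) (s + r + k - 1 - c):] else 0))"
  using assms by (simp add: F_mat_def Let_def algebra_simps)

text \<open>Subtracting from the row of \<open>x ^ (r - 1 - i) * f\<close> the rows of \<open>g\<close>, weighted by the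
  coefficients of the quotient of \<open>x ^ (r - 1 - i) * f\<close> by \<open>g\<close>, leaves the row of the remainder.\<close>
lemma F_mat_row_reduction:
  fixes f g :: "'a::field poly"
  assumes r: "1 \<le> r" and g: "degree g = r + k" "coeff g (r + k) = 1" and f: "degree f \<le> s + k"
    and i: "i < r" and c: "c < r + s"
  defines "F \<equiv> F_mat k (s + k) (r + k) f g" and "q \<equiv> monom 1 (r - 1 - i) * f div g"
  shows "F $$ (i, c) - (\<Sum>t<s. [:coeff q t:] * F $$ (r + s - 1 - t, c)) =
    (if c < r + s - 1 then [:coeff (monom 1 (r - 1 - i) * f mod g) (s + r + k - 1 - c):] else monom 1 (r - 1 - i))"
proof -
  have "g \<noteq> 0" using g by auto
  have "degree (monom 1 (r - 1 - i) * f) \<le> (r - 1 - i) + degree f"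
    by (metis degree_monom_le degree_mult_le add_le_mono order_trans le_refl)
  then have deg_q: "degree q < s \<or> q = 0"
    using degree_div_add_degree_le[OF \<open>g \<noteq> 0\<close>, of "monom 1 (r - 1 - i) * f"] g f r
    unfolding q_def by linarith
  have g_row: "F $$ (r + s - 1 - t, c) = (if c < r + s - 1 then [:shifted_coeff g t (s + r + k - 1 - c):] else 0)"
    if "t < s" for t
    using that c by (simp add: F_def F_mat_nth)
  show ?thesis
  proof (cases "c < r + s - 1")
    case True
    have "(\<Sum>t<s. [:coeff q t:] * F $$ (r + s - 1 - t, c)) =
        (\<Sum>t<s. [:coeff q t * shifted_coeff g t (s + r + k - 1 - c):])"
      using True by (intro sum.cong) (simp_all add: g_row[simplified])
    also have "\<dots> = [:coeff (q * g) (s + r + k - 1 - c):]"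
      by (simp add: coeff_mult_eq_sum_shifted_coeff[OF deg_q] sum_to_poly)
    finally have "(\<Sum>t<s. [:coeff q t:] * F $$ (r + s - 1 - t, c)) = [:coeff (q * g) (s + r + k - 1 - c):]" .
    moreover have "monom 1 (r - 1 - i) * f mod g = monom 1 (r - 1 - i) * f - q * g"
      by (simp add: q_def minus_div_mult_eq_mod)
    ultimately show ?thesis
      using True i c by (simp add: F_def F_mat_nth shifted_coeff_eq_coeff_monom_mult)
  next
    case False
    then have "(\<Sum>t<s. [:coeff q t:] * F $$ (r + s - 1 - t, c)) = 0"
      by (intro sum.neutral) (simp add: g_row[simplified])
    then show ?thesis using False i c by (simp add: F_def F_mat_nth)
  qed
qed

lemma det_F_mat_reduce_rows:
  fixes f g :: "'a::field poly"
  assumes r: "1 \<le> r" and g: "degree g = r + k" "coeff g (r + k) = 1" and f: "degree f \<le> s + k"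
  shows "det (F_mat k (s + k) (r + k) f g) = det (mat (r + s) (r + s) (\<lambda>(i, c).
    if i < r then (if c < r + s - 1 then [:coeff (monom 1 (r - 1 - i) * f mod g) (s + r + k - 1 - c):] else monom 1 (r - 1 - i))
    else F_mat k (s + k) (r + k) f g $$ (i, c)))"
    (is "det ?F = det ?R")
proof -
  define N where "N = r + s"
  define q where "q = (\<lambda>i. monom 1 (r - 1 - i) * f div g)"
  define L :: "'a poly mat" where
    "L = mat N N (\<lambda>(i, l). if i = l then 1 else if i < r \<and> r \<le> l then - [:coeff (q i) (r + s - 1 - l):] else 0)"
  have L: "L \<in> carrier_mat N N" by (simp add: L_def)
  have F: "?F \<in> carrier_mat N N" using F_mat_carrier by (simp add: N_def)
  have "diag_mat L = replicate N 1" by (rule nth_equalityI) (auto simp: L_def diag_mat_def)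
  moreover have "upper_triangular L" unfolding upper_triangular_def by (auto simp: L_def)
  ultimately have "det L = 1" by (simp add: det_upper_triangular[OF _ L])
  then have "det ?F = det (L * ?F)" using det_mult[OF L F] by simp
  also have "L * ?F = ?R"
  proof (rule eq_matI)
    fix i c assume "i < dim_row ?R" "c < dim_col ?R"
    then have i: "i < N" and c: "c < N" by (auto simp: N_def)
    have "(L * ?F) $$ (i, c) = (\<Sum>l<N. L $$ (i, l) * ?F $$ (l, c))"
      using i c L F by (simp add: scalar_prod_def atLeast0LessThan)
    also have "\<dots> = ?R $$ (i, c)"
    proof (cases "i < r")
      case False
      have "(\<Sum>l<N. L $$ (i, l) * ?F $$ (l, c)) = (\<Sum>l\<in>{i}. L $$ (i, l) * ?F $$ (l, c))"
        by (rule sum.mono_neutral_right) (use i False in \<open>auto simp: L_def\<close>)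
      then show ?thesis using False i c by (simp add: L_def N_def)
    next
      case True
      have "(\<Sum>l<N. L $$ (i, l) * ?F $$ (l, c)) = (\<Sum>l\<in>{i} \<union> {r..<N}. L $$ (i, l) * ?F $$ (l, c))"
        by (rule sum.mono_neutral_right) (use i True in \<open>auto simp: L_def\<close>)
      also have "\<dots> = ?F $$ (i, c) - (\<Sum>l\<in>{r..<r + s}. [:coeff (q i) (r + s - 1 - l):] * ?F $$ (l, c))"
        using True i by (subst sum.union_disjoint) (auto simp: L_def N_def sum_negf intro!: sum.cong)
      also have "(\<Sum>l\<in>{r..<r + s}. [:coeff (q i) (r + s - 1 - l):] * ?F $$ (l, c)) =
          (\<Sum>t<s. [:coeff (q i) t:] * ?F $$ (r + s - 1 - t, c))"
        by (rule sum.reindex_bij_witness[of _ "\<lambda>t. r + s - 1 - t" "\<lambda>l. r + s - 1 - l"]) auto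
      finally show ?thesis
        using F_mat_row_reduction[OF r g f True, of c] True i c by (simp add: q_def N_def)
    qed
    finally show "(L * ?F) $$ (i, c) = ?R $$ (i, c)" .
  qed (use L F in \<open>auto simp: N_def\<close>)
  finally show ?thesis .
qed

lemma det_F_mat_g_block:
  assumes r: "1 \<le> r" and g: "degree g = r + k" "coeff g (r + k) = 1"
  shows "det (mat s s (\<lambda>(i, c). F_mat k (s + k) (r + k) f g $$ (i + r, c))) = 1"
    (is "det ?G = 1")
proof -
  have "upper_triangular ?G"
    unfolding upper_triangular_def
  proof (intro allI impI)
    fix i c assume i: "i < dim_row ?G" and c: "c < i"
    have "coeff g (s + r + k - 1 - c - (s - 1 - i)) = 0" by (rule coeff_eq_0) (use c i g in auto)
    then show "?G $$ (i, c) = 0" using i c r by (auto simp: F_mat_nth shifted_coeff_def)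
  qed
  moreover have "diag_mat ?G = replicate s 1"
  proof (rule nth_equalityI)
    fix i assume "i < length (diag_mat ?G)"
    then have i: "i < s" by (simp add: diag_mat_def)
    then have "s + r + k - 1 - i - (s - 1 - i) = r + k" using r by auto
    then show "diag_mat ?G ! i = replicate s 1 ! i" using i r g
      by (auto simp: diag_mat_def F_mat_nth shifted_coeff_def)
  qed (simp add: diag_mat_def)
  ultimately show ?thesis using det_upper_triangular[of ?G s] by simp
qed

text \<open>Once the \<open>g\<close>-rows are moved to the top, the matrix is block upper triangular: the
  \<open>g\<close>-block is unitriangular because \<open>g\<close> is monic, and the remainders, of degree \<open>< r + k\<close>,
  vanish in the first \<open>s\<close> columns.\<close>
lemma det_F_mat_eq_remainder_mat:
  fixes f g :: "'a::field poly"
  assumes r: "1 \<le> r" and s: "1 \<le> s" and g: "degree g = r + k" "coeff g (r + k) = 1"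
    and f: "degree f \<le> s + k"
  shows "det (F_mat k (s + k) (r + k) f g) = (-1) ^ (r * s) * det (remainder_mat r (r + k) f g)"
proof -
  define F where "F = F_mat k (s + k) (r + k) f g"
  define R where "R = mat (s + r) (s + r) (\<lambda>(i, c).
    if i < r then (if c < r + s - 1 then [:coeff (monom 1 (r - 1 - i) * f mod g) (s + r + k - 1 - c):] else monom 1 (r - 1 - i))
    else F $$ (i, c))"
  define G where "G = mat s s (\<lambda>(i, c). F $$ (i + r, c))"
  define Y where "Y = mat s r (\<lambda>(i, c). F $$ (i + r, c + s))"
  have "g \<noteq> 0" using g by auto
  have det_F: "det F = det R"
    unfolding F_def R_def using det_F_mat_reduce_rows[OF r g f] by (simp add: add.commute)
  have "mat (s + r) (s + r) (\<lambda>(i, j). R $$ (if i < s then i + r else i - s, j))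
     = four_block_mat G Y (0\<^sub>m r s) (remainder_mat r (r + k) f g)"
  proof (rule eq_matI)
    fix i j assume "i < dim_row (four_block_mat G Y (0\<^sub>m r s) (remainder_mat r (r + k) f g))"
      "j < dim_col (four_block_mat G Y (0\<^sub>m r s) (remainder_mat r (r + k) f g))"
    then have i: "i < s + r" and j: "j < s + r" by (auto simp: G_def remainder_mat_def)
    show "mat (s + r) (s + r) (\<lambda>(i, j). R $$ (if i < s then i + r else i - s, j)) $$ (i, j) =
      four_block_mat G Y (0\<^sub>m r s) (remainder_mat r (r + k) f g) $$ (i, j)"
    proof (cases "i < s")
      case True
      then show ?thesis using i j by (auto simp: four_block_mat_def G_def Y_def R_def remainder_mat_def)
    next
      case False
      define p where "p = monom 1 (r - 1 - (i - s)) * f mod g"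
      have "degree p < r + k"
        using degree_mod_less[OF \<open>g \<noteq> 0\<close>, of "monom 1 (r - 1 - (i - s)) * f"] g r by (auto simp: p_def)
      then have "coeff p (s + r + k - 1 - j) = 0" if "j < s" using that by (intro coeff_eq_0) auto
      moreover have "s + r + k - 1 - j = r + k - 1 - (j - s)" if "\<not> j < s" using that j by auto
      ultimately show ?thesis using False i j s r
        by (auto simp: four_block_mat_def G_def Y_def remainder_mat_def R_def p_def)
    qed
  qed (auto simp: G_def remainder_mat_def)
  moreover have "det G = 1"
    unfolding G_def F_def by (rule det_F_mat_g_block[OF r g])
  moreover have "R \<in> carrier_mat (s + r) (s + r)" by (simp add: R_def)
  ultimately have "det R = (-1) ^ (s * r) * det (remainder_mat r (r + k) f g)"
    using det_swap_rows[of R s r] det_four_block_mat_lower_left_zero[of G s Y r "0\<^sub>m r s" "remainder_mat r (r + k) f g"]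
    by (simp add: G_def Y_def remainder_mat_def)
  then show ?thesis using det_F by (simp add: F_def mult.commute)
qed

lemma F_k_eq_sum_index_subsets:
  fixes f g :: "'a::field poly" and bs :: "'a list"
  assumes bs: "distinct bs" "length bs = r + k" and roots: "\<forall>b\<in>set bs. poly g b = 0"
    and g: "degree g = r + k" "coeff g (r + k) = 1" and f: "degree f \<le> s + k"
    and r: "1 \<le> r" and s: "1 \<le> s"
  shows "F_k k (s + k) (r + k) f g = (-1) ^ (r * s + (k + 1) + (r + k)) *
     (\<Sum>S | S \<subseteq> {0..<r + k} \<and> card S + 1 = r.
        smult ((\<Prod>l\<in>S. poly f (bs ! l)) / (\<Prod>l\<in>S. \<Prod>l'\<in>{0..<r + k} - S. bs ! l - bs ! l'))
              (\<Prod>l\<in>S. [:- bs ! l, 1:]))"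
    (is "_ = _ * ?\<Sigma>")
proof -
  define V where "V = vandermonde_prod (map (\<lambda>b. [:b:]) bs)"
  have "V \<noteq> 0"
    using vandermonde_prod_nonzero[of "map (\<lambda>b. [:b:]) bs"] bs by (simp add: V_def distinct_map inj_on_def)
  have "V * ((-1) ^ (k + 1) * det (remainder_mat r (r + k) f g)) = V * ((-1) ^ (r + k) * ?\<Sigma>)"
    using det_remainder_mat_mult_vandermonde[OF bs(2) roots g(1) r, of f]
      det_weighted_vandermonde_mat_const_poly[OF bs, of r "\<lambda>l. poly f (bs ! l)"]
    by (simp add: V_def mult_ac)
  then have "(-1) ^ (k + 1) * det (remainder_mat r (r + k) f g) = (-1) ^ (r + k) * ?\<Sigma>"
    using mult_left_cancel[OF \<open>V \<noteq> 0\<close>] by blast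
  then have "(-1) ^ (k + 1) * ((-1) ^ (k + 1) * det (remainder_mat r (r + k) f g)) = (-1) ^ (k + 1) * ((-1) ^ (r + k) * ?\<Sigma>)"
    by (rule arg_cong)
  then have "det (remainder_mat r (r + k) f g) = (-1) ^ (k + 1) * (-1) ^ (r + k) * ?\<Sigma>"
    by (simp only: mult.assoc[symmetric] minus_one_mult_self mult_1)
  then show ?thesis
    unfolding F_k_def det_F_mat_eq_remainder_mat[OF r s g f] by (simp add: power_add mult.assoc)
qed

definition sylvester_sum :: "'a::field poly \<Rightarrow> nat \<Rightarrow> 'a set \<Rightarrow> 'a poly" where
  "sylvester_sum f q B =
     (\<Sum>B' | B' \<subseteq> B \<and> card B' = q. smult ((\<Prod>b\<in>B'. poly f b) / Res B' (B - B')) (Resx B'))"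

lemma smult_neg_one_power:
  fixes p :: "'a::comm_ring_1 poly"
  shows "smult ((-1) ^ j) p = (-1) ^ j * p"
  by (induction j) auto

lemma Syl_card_eq_sylvester_sum:
  fixes A B :: "'a::field set"
  assumes "finite A"
  defines "f \<equiv> \<Prod>a\<in>A. [:- a, 1:]"
  shows "Syl (card A) q A B = (-1) ^ (card A * q) * (sylvester_sum f q B * f)"
proof -
  define Bs where "Bs = {B'. B' \<subseteq> B \<and> card B' = q}"
  have "{A'. A' \<subseteq> A \<and> card A' = card A} = {A}"
    using assms card_subset_eq by auto
  then have "Syl (card A) q A B = (\<Sum>B'\<in>Bs. smult (Res A B' / Res B' (B - B')) (f * Resx B'))"
    by (simp add: Syl_def Bs_def sum.cartesian_product[symmetric] Res_def Resx_def f_def)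
  also have "\<dots> = (\<Sum>B'\<in>Bs. (-1) ^ (card A * q) * (smult ((\<Prod>b\<in>B'. poly f b) / Res B' (B - B')) (Resx B') * f))"
  proof (rule sum.cong[OF refl])
    fix B' assume "B' \<in> Bs"
    then have "card B' = q" by (simp add: Bs_def)
    have "Res A B' = (\<Prod>b\<in>B'. \<Prod>a\<in>A. a - b)" unfolding Res_def by (rule prod.swap)
    also have "\<dots> = (\<Prod>b\<in>B'. (-1) ^ card A * poly f b)"
      using prod_uminus[of "\<lambda>a. _ - a" A] by (simp add: f_def poly_prod)
    also have "\<dots> = (-1) ^ (card A * q) * (\<Prod>b\<in>B'. poly f b)"
      by (simp add: prod.distrib \<open>card B' = q\<close> power_mult)
    finally show "smult (Res A B' / Res B' (B - B')) (f * Resx B') =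
      (-1) ^ (card A * q) * (smult ((\<Prod>b\<in>B'. poly f b) / Res B' (B - B')) (Resx B') * f)"
      unfolding smult_neg_one_power[symmetric] by (simp add: mult.commute)
  qed
  finally show ?thesis
    by (simp only: sylvester_sum_def Bs_def sum_distrib_left sum_distrib_right)
qed

lemma sum_subsets_set_conv_nth_image:
  assumes "distinct bs"
  shows "(\<Sum>B' | B' \<subseteq> set bs \<and> card B' = q. h B') = (\<Sum>S | S \<subseteq> {0..<length bs} \<and> card S = q. h ((!) bs ` S))"
proof (rule sum.reindex_bij_betw[symmetric])
  have inj: "inj_on ((!) bs) {0..<length bs}" using assms by (simp add: inj_on_nth)
  have image_nth: "(!) bs ` {l. l < length bs \<and> bs ! l \<in> B'} = B'" if "B' \<subseteq> set bs" for B'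
  proof
    show "B' \<subseteq> (!) bs ` {l. l < length bs \<and> bs ! l \<in> B'}"
    proof
      fix b assume "b \<in> B'"
      then have "b \<in> set bs" using that by auto
      then obtain l where "l < length bs" "bs ! l = b" by (auto simp: in_set_conv_nth)
      then show "b \<in> (!) bs ` {l. l < length bs \<and> bs ! l \<in> B'}" using \<open>b \<in> B'\<close> by auto
    qed
  qed auto
  show "bij_betw ((`) ((!) bs)) {S. S \<subseteq> {0..<length bs} \<and> card S = q} {B'. B' \<subseteq> set bs \<and> card B' = q}"
  proof (rule bij_betw_byWitness[where f' = "\<lambda>B'. {l. l < length bs \<and> bs ! l \<in> B'}"])
    show "\<forall>S\<in>{S. S \<subseteq> {0..<length bs} \<and> card S = q}. {l. l < length bs \<and> bs ! l \<in> (!) bs ` S} = S"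
    proof
      fix S assume "S \<in> {S. S \<subseteq> {0..<length bs} \<and> card S = q}"
      then have S: "S \<subseteq> {0..<length bs}" by simp
      then show "{l. l < length bs \<and> bs ! l \<in> (!) bs ` S} = S"
        using inj_on_image_mem_iff[OF inj _ S] by auto
    qed
    show "\<forall>B'\<in>{B'. B' \<subseteq> set bs \<and> card B' = q}. (!) bs ` {l. l < length bs \<and> bs ! l \<in> B'} = B'"
      using image_nth by blast
    show "(`) ((!) bs) ` {S. S \<subseteq> {0..<length bs} \<and> card S = q} \<subseteq> {B'. B' \<subseteq> set bs \<and> card B' = q}"
      using inj by (auto simp: card_image inj_on_subset)
    show "(\<lambda>B'. {l. l < length bs \<and> bs ! l \<in> B'}) ` {B'. B' \<subseteq> set bs \<and> card B' = q}
        \<subseteq> {S. S \<subseteq> {0..<length bs} \<and> card S = q}"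
    proof
      fix S assume "S \<in> (\<lambda>B'. {l. l < length bs \<and> bs ! l \<in> B'}) ` {B'. B' \<subseteq> set bs \<and> card B' = q}"
      then obtain B' where B': "B' \<subseteq> set bs" "card B' = q" and S: "S = {l. l < length bs \<and> bs ! l \<in> B'}"
        by auto
      have "inj_on ((!) bs) S" using inj_on_subset[OF inj] S by (simp add: subset_iff)
      then have "card S = card ((!) bs ` S)" by (rule card_image[symmetric])
      also have "(!) bs ` S = B'" using image_nth[OF B'(1)] S by simp
      finally show "S \<in> {S. S \<subseteq> {0..<length bs} \<and> card S = q}" using S B'(2) by auto
    qed
  qed
qed

lemma F_k_eq_sylvester_sum:
  fixes f :: "'a::field poly" and B :: "'a set"
  assumes B: "finite B" "card B = r + k" and f: "degree f \<le> s + k" and r: "1 \<le> r" and s: "1 \<le> s"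
  shows "F_k k (s + k) (r + k) f (\<Prod>b\<in>B. [:- b, 1:]) = (-1) ^ (r * s + (k + 1) + (r + k)) * sylvester_sum f (r - 1) B"
proof -
  obtain bs where bs: "distinct bs" "set bs = B" using finite_distinct_list[OF B(1)] by blast
  have len: "length bs = r + k" using distinct_card[OF bs(1)] bs(2) B(2) by simp
  have g: "degree (\<Prod>b\<in>B. [:- b, 1:]) = r + k" "coeff (\<Prod>b\<in>B. [:- b, 1:]) (r + k) = 1"
    using B lead_coeff_prod[of "\<lambda>b. [:- b, 1:]" B] by (simp_all add: degree_prod_eq_sum_degree)
  have roots: "\<forall>b\<in>set bs. poly (\<Prod>b\<in>B. [:- b, 1:]) b = 0"
    using B(1) bs(2) by (auto simp: poly_prod)
  have inj: "inj_on ((!) bs) {0..<r + k}" using bs(1) len by (simp add: inj_on_nth)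
  have "sylvester_sum f (r - 1) B = (\<Sum>S | S \<subseteq> {0..<r + k} \<and> card S + 1 = r.
      smult ((\<Prod>l\<in>S. poly f (bs ! l)) / (\<Prod>l\<in>S. \<Prod>l'\<in>{0..<r + k} - S. bs ! l - bs ! l')) (\<Prod>l\<in>S. [:- bs ! l, 1:]))"
    unfolding sylvester_sum_def bs(2)[symmetric] sum_subsets_set_conv_nth_image[OF bs(1)] len
  proof (rule sum.cong)
    show "{S. S \<subseteq> {0..<r + k} \<and> card S = r - 1} = {S. S \<subseteq> {0..<r + k} \<and> card S + 1 = r}" using r by auto
  next
    fix S assume "S \<in> {S. S \<subseteq> {0..<r + k} \<and> card S + 1 = r}"
    then have S: "S \<subseteq> {0..<r + k}" by simp
    have inj_S: "inj_on ((!) bs) S" and inj_Sc: "inj_on ((!) bs) ({0..<r + k} - S)"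
      using inj_on_subset[OF inj] S by auto
    have "set bs - (!) bs ` S = (!) bs ` ({0..<r + k} - S)"
      using S inj len by (auto simp: inj_on_image_set_diff atLeast0LessThan[symmetric] set_conv_nth)
    then show "smult ((\<Prod>b\<in>(!) bs ` S. poly f b) / Res ((!) bs ` S) (set bs - (!) bs ` S)) (Resx ((!) bs ` S)) =
      smult ((\<Prod>l\<in>S. poly f (bs ! l)) / (\<Prod>l\<in>S. \<Prod>l'\<in>{0..<r + k} - S. bs ! l - bs ! l')) (\<Prod>l\<in>S. [:- bs ! l, 1:])"
      by (simp add: Res_def Resx_def prod.reindex[OF inj_S] prod.reindex[OF inj_Sc])
  qed
  then show ?thesis
    unfolding F_k_eq_sum_index_subsets[OF bs(1) len roots g f r s] by simp
qed

theorem proposition3p9: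
  fixes A B :: "'a::field set" and d :: nat
  assumes "finite A" and "finite B"
    and "max (card A) (card B) \<le> d" and "d + 1 \<le> card A + card B"
  shows "Syl (card A) (d - card A) A B =
           (-1) ^ ((d - card A) * card B + card A + card B - 1) *
           F_k (card A + card B - d - 1) (card A) (card B)
               (\<Prod>a\<in>A. [:- a, 1:]) (\<Prod>b\<in>B. [:- b, 1:]) *
           (\<Prod>a\<in>A. [:- a, 1:])"
proof -
  define m n f where "m = card A" and "n = card B" and "f = (\<Prod>a\<in>A. [:- a, 1:])"
  define k where "k = m + n - d - 1"
  define r s where "r = n - k" and "s = m - k"
  have n: "n = r + k" and m: "m = s + k" and r: "1 \<le> r" and s: "1 \<le> s" and d: "d - m = r - 1"
    using assms by (auto simp: r_def s_def k_def m_def n_def)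
  have "degree f \<le> s + k" using m by (simp add: f_def degree_prod_eq_sum_degree m_def)
  then have F_k: "F_k k m n f (\<Prod>b\<in>B. [:- b, 1:]) = (-1) ^ (r * s + (k + 1) + (r + k)) * sylvester_sum f (r - 1) B"
    using F_k_eq_sylvester_sum[OF assms(2) _ _ r s] n by (simp add: m n_def)
  obtain r' where r': "r = Suc r'" using r by (cases r) auto
  have "even ((d - m) * n + m + n - 1 + (r * s + (k + 1) + (r + k))) = even (m * (r - 1))"
    unfolding d by (simp add: m n r') presburger
  then have sign: "((-1) ^ (m * (r - 1)) :: 'a poly) = (-1) ^ ((d - m) * n + m + n - 1) * (-1) ^ (r * s + (k + 1) + (r + k))"
    unfolding power_add[symmetric] by (cases "even (m * (r - 1))") (simp_all add: neg_one_even_power neg_one_odd_power)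
  have "Syl m (d - m) A B = (-1) ^ (m * (r - 1)) * (sylvester_sum f (r - 1) B * f)"
    unfolding d[symmetric] m_def f_def by (rule Syl_card_eq_sylvester_sum[OF assms(1)])
  also have "\<dots> = (-1) ^ ((d - m) * n + m + n - 1) * F_k k m n f (\<Prod>b\<in>B. [:- b, 1:]) * f"
    unfolding sign F_k by (simp only: mult.assoc)
  finally show ?thesis unfolding m_def n_def k_def f_def .
qed

end
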